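(* For all even integers $n\ge0$ and real numbers $a\ge1$, $x\in(-1,1)$, we have $\Lambda_{n,a}(x)\ge1$. Equality holds if and only if $n=0$, or $n=2$, $a=1$, $x=-1/2$.
   Context: $U_j$ denotes the Chebyshev polynomial of the second kind of degree $j$, i.e. $U_j(\cos t)=\sin((j+1)t)/\sin t$. For a real number $a$ and integers $0\le m$, $\binom{m+a}{m}=\frac{(a+1)(a+2)\cdots(a+m)}{m!}$ (equal to $1$ when $m=0$). For an integer $n\ge0$, $\Lambda_{n,a}(x)=\sum_{j=0}^n\binom{n+a-j}{n-j}U_j(x)$. *)

theory Defs
  imports "HOL-Analysis.Analysis"
begin

text \<open>Chebyshev polynomials of the second kind, by the standard recurrence
  U_0 = 1, U_1 = 2x, U_(j+2) = 2x U_(j+1) - U_j, so that U_j(cos t) = sin((j+1)t)/sin t.\<close>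
fun chebU :: "nat \<Rightarrow> real \<Rightarrow> real" where
  "chebU 0 x = 1"
| "chebU (Suc 0) x = 2 * x"
| "chebU (Suc (Suc j)) x = 2 * x * chebU (Suc j) x - chebU j x"

text \<open>binom(m+a, m) = (a+1)...(a+m)/m!, i.e. the generalized binomial (a+m) gchoose m.\<close>
definition binomR :: "nat \<Rightarrow> real \<Rightarrow> real" where
  "binomR m a = (a + real m) gchoose m"

definition Lambda :: "nat \<Rightarrow> real \<Rightarrow> real \<Rightarrow> real" where
  "Lambda n a x = (\<Sum>j=0..n. binomR (n - j) a * chebU j x)"

end

theory Submission
  imports Defs
begin

text \<open>Two summations by parts, each using binom(m+a,m) = \<Sum>i\<le>m. binom(i+a-1,i), give
  \<Lambda>_{n,a}(x) = S_n(x) + \<Sum>k<n. binom(n-k+a-2,n-k) S_k(x), where S_k are the double partial sums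
  of the U_j; for a \<ge> 1 the weights are nonnegative, and they all vanish iff a = 1.
  Telescoping gives 2(1-x) S_k = k + 2 - U_{k+1}(x). For x = cos t, U_{m+2} - U_m = 2 cos((m+2)t) \<le> 2,
  so U_{k+1} < k + 2, whence S_k > 0, and U_{2k+1} \<le> U_1 + 2k = 2k + 2x, whence S_{2k} \<ge> 1.
  As U_5 < 4 + 2x on (-1,1), the latter is strict for k \<ge> 2, and S_2 = 1 + (2x+1)^2 settles the
  equality case.\<close>

lemma chebU_Suc_Suc_minus_cos:
  "chebU (Suc (Suc m)) (cos t) - chebU m (cos t) = 2 * cos (real (Suc (Suc m)) * t)"
proof (induction m rule: induct_nat_012)
  case 0
  show ?case by (simp add: cos_double_cos power2_eq_square)
next
  case 1
  show ?case
    using cos_treble_cos[of t] by (simp add: eval_nat_numeral power3_eq_cube algebra_simps)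
next
  case (ge2 m)
  have "cos (real (m + 4) * t) = 2 * cos t * cos (real (m + 3) * t) - cos (real (m + 2) * t)"
    using cos_add[of "real (m + 3) * t" t] cos_diff[of "real (m + 3) * t" t]
    by (simp add: algebra_simps)
  with ge2.IH show ?case
    by (simp add: eval_nat_numeral algebra_simps)
qed

lemma chebU_Suc_Suc_minus_le:
  assumes "-1 \<le> x" "x \<le> 1"
  shows "chebU (Suc (Suc m)) x - chebU m x \<le> 2"
proof -
  have "x = cos (arccos x)" using assms by simp
  then have "chebU (Suc (Suc m)) x - chebU m x = 2 * cos (real (Suc (Suc m)) * arccos x)"
    using chebU_Suc_Suc_minus_cos[of m "arccos x"] by metis
  then show ?thesis using cos_le_one[of "real (Suc (Suc m)) * arccos x"] by linarith
qed

lemma chebU_add_double_le: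
  assumes "-1 \<le> x" "x \<le> 1"
  shows "chebU (m + 2 * k) x \<le> chebU m x + 2 * real k"
proof (induction k)
  case (Suc k)
  have "chebU (Suc (Suc (m + 2 * k))) x - chebU (m + 2 * k) x \<le> 2"
    using assms by (rule chebU_Suc_Suc_minus_le)
  with Suc.IH show ?case by simp
qed simp

lemma chebU_less:
  assumes "-1 < x" "x < 1" "1 \<le> m"
  shows "chebU m x < real m + 1"
proof (cases "odd m")
  case True
  then obtain k where "m = 1 + 2 * k" by (metis oddE add.commute)
  then show ?thesis
    using chebU_add_double_le[of x 1 k] assms by simp
next
  case False
  define k where "k = m div 2 - 1"
  have m: "m = 2 + 2 * k" using False assms(3) unfolding k_def by presburger
  have "chebU m x \<le> chebU 2 x + 2 * real k"
    unfolding m using assms by (intro chebU_add_double_le) auto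
  moreover have "chebU 2 x = 4 * x * x - 1" by (simp add: numeral_2_eq_2)
  moreover have "x * x < 1"
  proof -
    have "0 < (1 - x) * (1 + x)" using assms by simp
    then show ?thesis by (simp add: algebra_simps)
  qed
  moreover have "real m = 2 + 2 * real k" using m by simp
  ultimately show ?thesis by linarith
qed

lemma chebU_5_less:
  assumes "x < 1"
  shows "chebU 5 x < 4 + 2 * x"
proof -
  have "4 + 2 * x - chebU 5 x = 4 * (1 - x) * (8 * (x\<^sup>2 + x / 2 - 3 / 16)\<^sup>2 + (x + 3 / 4)\<^sup>2 + 5 / 32)"
    by (simp add: eval_nat_numeral algebra_simps power2_eq_square)
  moreover have "0 < 8 * (x\<^sup>2 + x / 2 - 3 / 16)\<^sup>2 + (x + 3 / 4)\<^sup>2 + 5 / 32"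
    by (intro add_nonneg_pos) auto
  ultimately show ?thesis using assms by (metis diff_gt_0_iff_gt mult_pos_pos zero_less_numeral)
qed

lemma chebU_odd_le:
  assumes "-1 \<le> x" "x \<le> 1"
  shows "chebU (2 * k + 1) x \<le> 2 * real k + 2 * x"
  using chebU_add_double_le[OF assms, of 1 k] by (simp add: add.commute)

lemma chebU_odd_less:
  assumes "-1 < x" "x < 1" "2 \<le> k"
  shows "chebU (2 * k + 1) x < 2 * real k + 2 * x"
proof -
  have "2 * k + 1 = 5 + 2 * (k - 2)" using assms(3) by simp
  then have "chebU (2 * k + 1) x \<le> chebU 5 x + 2 * real (k - 2)"
    using chebU_add_double_le[of x 5 "k - 2"] assms by simp
  with chebU_5_less[OF assms(2)] assms(3) show ?thesis by simp
qed

lemma chebU_3_eq: "chebU 3 x = 2 + 2 * x - 2 * (1 - x) * (2 * x + 1)\<^sup>2"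
  by (simp add: eval_nat_numeral algebra_simps power2_eq_square)

definition chebU_sum :: "nat \<Rightarrow> real \<Rightarrow> real" where
  "chebU_sum k x = (\<Sum>j\<le>k. chebU j x)"

definition chebU_sum2 :: "nat \<Rightarrow> real \<Rightarrow> real" where
  "chebU_sum2 k x = (\<Sum>i\<le>k. chebU_sum i x)"

lemma chebU_sum_closed: "2 * (1 - x) * chebU_sum k x = 1 + chebU k x - chebU (Suc k) x"
  by (induction k) (simp_all add: chebU_sum_def algebra_simps)

lemma chebU_sum2_closed: "2 * (1 - x) * chebU_sum2 k x = real k + 2 - chebU (Suc k) x"
proof (induction k)
  case 0
  show ?case using chebU_sum_closed[of x 0] by (simp add: chebU_sum2_def)
next
  case (Suc k)
  have "chebU_sum2 (Suc k) x = chebU_sum2 k x + chebU_sum (Suc k) x"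
    by (simp add: chebU_sum2_def)
  with Suc.IH chebU_sum_closed[of x "Suc k"] show ?case by (simp add: algebra_simps)
qed

lemma chebU_sum2_pos:
  assumes "-1 < x" "x < 1"
  shows "0 < chebU_sum2 k x"
proof -
  have "chebU (Suc k) x < real (Suc k) + 1" using assms by (intro chebU_less) auto
  then have "0 < 2 * (1 - x) * chebU_sum2 k x" using chebU_sum2_closed[of x k] by linarith
  with assms show ?thesis by (simp add: zero_less_mult_iff)
qed

lemma chebU_sum2_even_minus_1:
  "2 * (1 - x) * (chebU_sum2 (2 * k) x - 1) = 2 * real k + 2 * x - chebU (2 * k + 1) x"
  using chebU_sum2_closed[of x "2 * k"] by (simp add: algebra_simps)

lemma chebU_sum2_even_ge_1:
  assumes "-1 < x" "x < 1"
  shows "1 \<le> chebU_sum2 (2 * k) x"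
proof -
  have "0 \<le> 2 * (1 - x) * (chebU_sum2 (2 * k) x - 1)"
    using chebU_odd_le[of x k] chebU_sum2_even_minus_1[of x k] assms by linarith
  with assms show ?thesis by (simp add: zero_le_mult_iff)
qed

lemma chebU_sum2_even_eq_1_iff:
  assumes "-1 < x" "x < 1"
  shows "chebU_sum2 (2 * k) x = 1 \<longleftrightarrow> k = 0 \<or> (k = 1 \<and> x = -1/2)"
proof -
  have "chebU_sum2 (2 * k) x = 1 \<longleftrightarrow> chebU (2 * k + 1) x = 2 * real k + 2 * x"
    using chebU_sum2_even_minus_1[of x k] assms by auto
  also have "\<dots> \<longleftrightarrow> k = 0 \<or> (k = 1 \<and> x = -1/2)"
  proof -
    consider "k = 0" | "k = 1" | "2 \<le> k" by linarith
    then show ?thesis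
    proof cases
      case 2
      have "chebU 3 x = 2 + 2 * x \<longleftrightarrow> (2 * x + 1)\<^sup>2 = 0"
        using assms by (subst chebU_3_eq) simp
      also have "\<dots> \<longleftrightarrow> x = -1/2" by (auto simp: algebra_simps)
      finally show ?thesis using 2 by (simp add: numeral_3_eq_3)
    next
      case 3
      then show ?thesis using chebU_odd_less[OF assms 3] by auto
    qed simp
  qed
  finally show ?thesis .
qed

lemma binomR_pochhammer: "binomR m b = pochhammer (b + 1) m / fact m"
  unfolding binomR_def by (simp add: gbinomial_pochhammer')

lemma binomR_0 [simp]: "binomR 0 b = 1"
  by (simp add: binomR_def)

lemma binomR_pos: "-1 < b \<Longrightarrow> 0 < binomR m b"
  by (simp add: binomR_pochhammer pochhammer_pos)

lemma binomR_minus_one: "0 < m \<Longrightarrow> binomR m (-1) = 0"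
  by (simp add: binomR_pochhammer pochhammer_0_left)

lemma binomR_nonneg:
  assumes "-1 \<le> b"
  shows "0 \<le> binomR m b"
proof (cases "b = -1")
  case True
  then show ?thesis by (simp add: binomR_pochhammer pochhammer_0_left)
next
  case False
  with assms binomR_pos[of b m] show ?thesis by simp
qed

lemma binomR_parallel_sum: "(\<Sum>i\<le>m. binomR i b) = binomR m (b + 1)"
  unfolding binomR_def using gbinomial_parallel_sum[of b m] by (simp add: add_ac)

lemma sum_atMost_prefix_sum_swap:
  fixes h g :: "nat \<Rightarrow> 'a::comm_semiring_1"
  shows "(\<Sum>j\<le>n. (\<Sum>i\<le>n - j. h i) * g j) = (\<Sum>k\<le>n. h (n - k) * (\<Sum>j\<le>k. g j))"
proof -
  have "(\<Sum>j\<le>n. (\<Sum>i\<le>n - j. h i) * g j) = (\<Sum>j\<le>n. \<Sum>k\<in>{k \<in> {..n}. j \<le> k}. h (n - k) * g j)"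
  proof (intro sum.cong refl)
    fix j assume "j \<in> {..n}"
    then have "(\<Sum>i\<le>n - j. h i) = (\<Sum>k\<in>{j..n}. h (n - k))"
      by (intro sum.reindex_bij_witness[where i="\<lambda>k. n - k" and j="\<lambda>i. n - i"]) auto
    moreover have "{k \<in> {..n}. j \<le> k} = {j..n}" by auto
    ultimately show "(\<Sum>i\<le>n - j. h i) * g j = (\<Sum>k\<in>{k \<in> {..n}. j \<le> k}. h (n - k) * g j)"
      by (simp add: sum_distrib_right)
  qed
  also have "\<dots> = (\<Sum>k\<le>n. \<Sum>j\<in>{j \<in> {..n}. j \<le> k}. h (n - k) * g j)"
    by (rule sum.swap_restrict) auto
  also have "\<dots> = (\<Sum>k\<le>n. h (n - k) * (\<Sum>j\<le>k. g j))"
    by (intro sum.cong refl) (auto simp: sum_distrib_left intro!: sum.cong)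
  finally show ?thesis .
qed

lemma Lambda_eq_binomR_chebU_sum2:
  "Lambda n a x = (\<Sum>k\<le>n. binomR (n - k) (a - 2) * chebU_sum2 k x)"
proof -
  have "Lambda n a x = (\<Sum>j\<le>n. (\<Sum>i\<le>n - j. binomR i (a - 1)) * chebU j x)"
    unfolding Lambda_def atLeast0AtMost by (simp only: binomR_parallel_sum diff_add_cancel)
  also have "\<dots> = (\<Sum>k\<le>n. binomR (n - k) (a - 1) * chebU_sum k x)"
    unfolding chebU_sum_def by (rule sum_atMost_prefix_sum_swap)
  also have "\<dots> = (\<Sum>k\<le>n. (\<Sum>i\<le>n - k. binomR i (a - 2)) * chebU_sum k x)"
    using binomR_parallel_sum[where b = "a - 2"] by (simp add: algebra_simps)
  also have "\<dots> = (\<Sum>k\<le>n. binomR (n - k) (a - 2) * chebU_sum2 k x)"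
    unfolding chebU_sum2_def by (rule sum_atMost_prefix_sum_swap)
  finally show ?thesis .
qed

lemma Lambda_eq_chebU_sum2_plus:
  "Lambda n a x = chebU_sum2 n x + (\<Sum>k<n. binomR (n - k) (a - 2) * chebU_sum2 k x)"
  unfolding Lambda_eq_binomR_chebU_sum2 lessThan_Suc_atMost[symmetric] by simp

lemma binomR_weighted_chebU_sum2_nonneg:
  assumes "-1 \<le> b" "-1 < x" "x < 1"
  shows "0 \<le> (\<Sum>k<n. binomR (n - k) b * chebU_sum2 k x)"
  using binomR_nonneg[OF assms(1)] chebU_sum2_pos[OF assms(2,3)]
  by (intro sum_nonneg) (simp add: less_imp_le)

lemma binomR_weighted_chebU_sum2_eq_0_iff:
  assumes "-1 \<le> b" "-1 < x" "x < 1"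
  shows "(\<Sum>k<n. binomR (n - k) b * chebU_sum2 k x) = 0 \<longleftrightarrow> n = 0 \<or> b = -1"
proof (cases "n = 0 \<or> b = -1")
  case True
  then show ?thesis by (auto simp: binomR_minus_one intro!: sum.neutral)
next
  case False
  then have "b > -1" "0 < n" using assms(1) by auto
  then have "0 < (\<Sum>k<n. binomR (n - k) b * chebU_sum2 k x)"
    using binomR_pos chebU_sum2_pos[OF assms(2,3)]
    by (intro sum_pos2[where i=0]) (auto simp: less_imp_le)
  with False show ?thesis by simp
qed

theorem theorem4p1:
  fixes n :: nat and a x :: real
  assumes "even n" and "a \<ge> 1" and "-1 < x" and "x < 1"
  shows "Lambda n a x \<ge> 1 \<and>
         (Lambda n a x = 1 \<longleftrightarrow> (n = 0 \<or> (n = 2 \<and> a = 1 \<and> x = -1/2)))"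
proof -
  obtain k where n: "n = 2 * k" using assms(1) by blast
  define R where "R = (\<Sum>k<n. binomR (n - k) (a - 2) * chebU_sum2 k x)"
  have Lambda: "Lambda n a x = chebU_sum2 n x + R"
    unfolding R_def by (rule Lambda_eq_chebU_sum2_plus)
  have b: "-1 \<le> a - 2" using assms(2) by simp
  have "0 \<le> R" "R = 0 \<longleftrightarrow> n = 0 \<or> a = 1"
    unfolding R_def using binomR_weighted_chebU_sum2_nonneg[OF b assms(3,4)]
      binomR_weighted_chebU_sum2_eq_0_iff[OF b assms(3,4)] by auto
  moreover have "1 \<le> chebU_sum2 n x" "chebU_sum2 n x = 1 \<longleftrightarrow> n = 0 \<or> (n = 2 \<and> x = -1/2)"
    unfolding n using chebU_sum2_even_ge_1 chebU_sum2_even_eq_1_iff assms(3,4) by auto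
  ultimately show ?thesis unfolding Lambda by auto
qed

end
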